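(* Let $n\ge 1$ and let $G_1=(s_1,\dots,s_{2n})$ and $G_2=(t_1,\dots,t_{2n})$ be ordered Gauss codes of alternating OGC knot diagrams with $n$ crossings, whose first halves are both equal to $(1,-2,3,-4,\dots,(-1)^{n+1}n)$. Let $G_1'=(s_{n+1},\dots,s_{2n})$ and $G_2'=(t_{n+1},\dots,t_{2n})$ be their second halves, and define the product as the concatenation $P=(s_{n+1},\dots,s_{2n},-t_{n+1},\dots,-t_{2n})$. Then $P$ can be transformed into an ordered Gauss code, i.e., the absolute values of the first $n$ entries of $P$ are $n$ distinct elements of $\{1,\dots,n\}$, so that after relabelling the crossings (applying a permutation of $\{1,\dots,n\}$ to absolute values, keeping signs) $P$ becomes a sequence of length $2n$ whose first $n$ entries have absolute values $1,2,\dots,n$ in order.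
   Context: A Gauss code of a knot diagram with $n$ crossings is a sequence of $2n$ nonzero integers obtained by choosing a base point and orientation, labelling the crossings by $1,\dots,n$, and recording the labels of the crossings met along the traversal, with sign indicating over- or under-passage; each label appears exactly twice, once with each sign. A Gauss code is ordered if the absolute values of its first $n$ entries are $1,2,\dots,n$ in this order. An OGC diagram is a knot diagram admitting an ordered Gauss code. *)

theory Defs
  imports Main
begin

definition gauss_code :: "nat \<Rightarrow> int list \<Rightarrow> bool" where
  "gauss_code n G \<longleftrightarrow> length G = 2 * n \<and>
     (\<forall>x \<in> set G. x \<noteq> 0 \<and> \<bar>x\<bar> \<le> int n) \<and>
     (\<forall>i \<in> {1..n}. count_list G (int i) = 1 \<and> count_list G (- int i) = 1)"

definition ordered_gauss_code :: "nat \<Rightarrow> int list \<Rightarrow> bool" where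
  "ordered_gauss_code n G \<longleftrightarrow> gauss_code n G \<and>
     map abs (take n G) = map int [1..<n+1]"

text \<open>Alternating diagram: over- and under-passages alternate along the (closed) traversal,
  i.e. cyclically consecutive entries have opposite signs.\<close>
definition alternating_code :: "int list \<Rightarrow> bool" where
  "alternating_code G \<longleftrightarrow>
     (\<forall>i < length G. sgn (G ! i) \<noteq> sgn (G ! ((i + 1) mod length G)))"

definition std_half :: "nat \<Rightarrow> int list" where
  "std_half n = map (\<lambda>k. (-1) ^ (k + 1) * int k) [1..<n+1]"

definition gauss_product :: "nat \<Rightarrow> int list \<Rightarrow> int list \<Rightarrow> int list" where
  "gauss_product n G1 G2 = drop n G1 @ map uminus (drop n G2)"

definition relabel :: "(nat \<Rightarrow> nat) \<Rightarrow> int list \<Rightarrow> int list" where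
  "relabel \<sigma> G = map (\<lambda>x. sgn x * int (\<sigma> (nat \<bar>x\<bar>))) G"

end

theory Submission
  imports Defs "HOL-Library.Multiset"
begin

text \<open>A Gauss code with \<open>n\<close> crossings is exactly a list whose multiset of entries is
  \<open>{\<plusminus>1, \<dots>, \<plusminus>n}\<close>, each once. If the first half \<open>H\<close> of such a code meets every label once,
  the second half must consist of the remaining signed labels, i.e. it is a rearrangement of
  \<open>-H\<close>. Hence the second half of \<open>G\<^sub>1\<close> meets every label once, which makes the product
  orderable by a relabelling, and when \<open>G\<^sub>1\<close> and \<open>G\<^sub>2\<close> share their first half \<open>H\<close> the product
  has the multiset \<open>-H + H\<close> of a Gauss code.\<close>

lemma count_list_distinct: "distinct xs \<Longrightarrow> count_list xs x = (if x \<in> set xs then 1 else 0)"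
  by (induction xs) auto

lemma count_list_map_abs:
  "x \<noteq> 0 \<Longrightarrow> count_list (map abs xs) \<bar>x\<bar> = count_list xs x + count_list xs (- x)"
  for x :: int
  by (induction xs) (auto simp: abs_if)

lemma count_image_mset_uminus: "count (image_mset uminus M) x = count M (- x)"
  for x :: "'a::group_add"
  by (induction M) auto

lemma set_map_int_upt: "set (map int [1..<n+1]) = {1..int n}"
  by (simp add: image_int_atLeastLessThan del: upt_Suc) auto

lemma distinct_map_int_upt: "distinct (map int [m..<n])"
  by (simp add: distinct_map)

definition signed_labels :: "nat \<Rightarrow> int set" where
  "signed_labels n = {x. x \<noteq> 0 \<and> \<bar>x\<bar> \<le> int n}"

lemma signed_labels_eq: "signed_labels n = {- int n..int n} - {0}"
  by (auto simp: signed_labels_def)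

lemma finite_signed_labels [simp]: "finite (signed_labels n)"
  by (simp add: signed_labels_eq)

lemma card_signed_labels: "card (signed_labels n) = 2 * n"
  by (simp add: signed_labels_eq)

lemma gauss_code_iff_mset: "gauss_code n G \<longleftrightarrow> mset G = mset_set (signed_labels n)"
proof
  assume G: "gauss_code n G"
  show "mset G = mset_set (signed_labels n)"
  proof (rule multiset_eqI)
    fix x
    show "count (mset G) x = count (mset_set (signed_labels n)) x"
    proof (cases "x \<in> signed_labels n")
      case True
      then have "nat \<bar>x\<bar> \<in> {1..n}" and x: "x = int (nat \<bar>x\<bar>) \<or> x = - int (nat \<bar>x\<bar>)"
        by (auto simp: signed_labels_def)
      then have "count_list G x = 1"
        using G unfolding gauss_code_def by (metis x)
      then show ?thesis
        using True by (simp add: count_mset)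
    next
      case False
      then have "x \<notin> set G"
        using G by (auto simp: gauss_code_def signed_labels_def)
      then show ?thesis
        using False by (simp add: count_mset count_list_0_iff)
    qed
  qed
next
  assume G: "mset G = mset_set (signed_labels n)"
  have "length G = 2 * n"
    by (metis G size_mset size_mset_set card_signed_labels)
  moreover have "set G = signed_labels n"
    by (metis G finite_signed_labels finite_set_mset_mset_set set_mset_mset)
  moreover have "count_list G x = 1" if "x \<in> signed_labels n" for x
    using that by (simp flip: count_mset add: G)
  ultimately show "gauss_code n G"
    by (auto simp: gauss_code_def signed_labels_def)
qed

lemma gauss_code_relabel:
  assumes \<sigma>: "bij_betw \<sigma> {1..n} {1..n}" and G: "gauss_code n G"
  shows "gauss_code n (relabel \<sigma> G)"
proof -
  define r where "r x = sgn x * int (\<sigma> (nat \<bar>x\<bar>))" for x :: int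
  have \<sigma>_label: "\<sigma> (nat \<bar>x\<bar>) \<in> {1..n}" if "x \<in> signed_labels n" for x
  proof -
    have "nat \<bar>x\<bar> \<in> {1..n}"
      using that by (auto simp: signed_labels_def)
    then show ?thesis
      using bij_betw_apply[OF \<sigma>] by blast
  qed
  have r_abs: "\<bar>r x\<bar> = int (\<sigma> (nat \<bar>x\<bar>))" and r_sgn: "sgn (r x) = sgn x"
    if "x \<in> signed_labels n" for x
    using that \<sigma>_label[OF that] by (auto simp: r_def abs_mult sgn_mult signed_labels_def)
  have "r ` signed_labels n \<subseteq> signed_labels n"
    using r_abs \<sigma>_label by (fastforce simp: signed_labels_def)
  moreover have "inj_on r (signed_labels n)"
  proof (rule inj_onI)
    fix x y assume x: "x \<in> signed_labels n" and y: "y \<in> signed_labels n" and "r x = r y"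
    then have "\<sigma> (nat \<bar>x\<bar>) = \<sigma> (nat \<bar>y\<bar>)" and "sgn x = sgn y"
      using r_abs r_sgn by (metis of_nat_eq_iff)+
    moreover have "nat \<bar>x\<bar> \<in> {1..n}" "nat \<bar>y\<bar> \<in> {1..n}"
      using x y by (auto simp: signed_labels_def)
    ultimately have "nat \<bar>x\<bar> = nat \<bar>y\<bar>" and "sgn x = sgn y"
      using bij_betw_imp_inj_on[OF \<sigma>] by (auto dest: inj_onD)
    then show "x = y"
      by (metis abs_ge_zero eq_nat_nat_iff sgn_mult_abs)
  qed
  ultimately have "r ` signed_labels n = signed_labels n"
    by (simp add: endo_inj_surj)
  then have "mset (relabel \<sigma> G) = mset_set (signed_labels n)"
    using G \<open>inj_on r (signed_labels n)\<close>
    by (simp add: relabel_def r_def[abs_def] gauss_code_iff_mset image_mset_mset_set)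
  then show ?thesis
    by (simp add: gauss_code_iff_mset)
qed

lemma ordered_gauss_code_mset_drop:
  assumes "ordered_gauss_code n G"
  shows "mset (drop n G) = image_mset uminus (mset (take n G))"
proof (rule multiset_eqI)
  fix x
  let ?H = "take n G" and ?K = "drop n G"
  have split: "count_list ?H x + count_list ?K x = (if x \<in> signed_labels n then 1 else 0)"
    using assms by (metis ordered_gauss_code_def gauss_code_iff_mset append_take_drop_id
        count_list_append count_mset count_mset_set finite_signed_labels)
  show "count (mset ?K) x = count (image_mset uminus (mset ?H)) x"
  proof (cases "x = 0")
    case True
    then show ?thesis
      using split by (simp add: count_mset count_image_mset_uminus signed_labels_def)
  next
    case False
    have "count_list ?H x + count_list ?H (- x) = count_list (map int [1..<n+1]) \<bar>x\<bar>"
      using assms False by (simp add: ordered_gauss_code_def flip: count_list_map_abs)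
    also have "\<dots> = (if x \<in> signed_labels n then 1 else 0)"
      using False unfolding count_list_distinct[OF distinct_map_int_upt] set_map_int_upt
      by (auto simp: signed_labels_def)
    finally show ?thesis
      using split by (simp add: count_mset count_image_mset_uminus)
  qed
qed

lemma ordered_gauss_code_mset_abs_drop:
  assumes "ordered_gauss_code n G"
  shows "mset (map abs (drop n G)) = mset (map int [1..<n+1])"
proof -
  have "mset (map abs (drop n G)) = mset (map abs (take n G))"
    using assms by (simp add: ordered_gauss_code_mset_drop multiset.map_comp o_def)
  also have "map abs (take n G) = map int [1..<n+1]"
    using assms by (simp add: ordered_gauss_code_def del: upt_Suc)
  finally show ?thesis .
qed

lemma mset_gauss_product:
  assumes "ordered_gauss_code n G1" and "ordered_gauss_code n G2"
    and "take n G1 = take n G2"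
  shows "mset (gauss_product n G1 G2) = mset G1"
proof -
  let ?H = "mset (take n G1)"
  have "mset (gauss_product n G1 G2) = image_mset uminus ?H + image_mset uminus (image_mset uminus ?H)"
    using assms by (simp add: gauss_product_def ordered_gauss_code_mset_drop)
  also have "\<dots> = mset (drop n G1) + ?H"
    using assms(1) by (simp add: ordered_gauss_code_mset_drop multiset.map_comp o_def)
  also have "\<dots> = mset G1"
    by (metis add.commute append_take_drop_id mset_append)
  finally show ?thesis .
qed

lemma exists_bij_betw_map_eq_upt:
  assumes "distinct xs" and "set xs = {1..n}"
  shows "\<exists>\<sigma>. bij_betw \<sigma> {1..n} {1..n} \<and> map \<sigma> xs = [1..<n+1]"
proof -
  have len: "length xs = n"
    using assms distinct_card by fastforce
  have nth: "bij_betw ((!) xs) {..<n} {1..n}"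
    using assms len by (intro bij_betw_nth) auto
  define \<sigma> where "\<sigma> = Suc \<circ> the_inv_into {..<n} ((!) xs)"
  have "bij_betw \<sigma> {1..n} {1..n}"
    unfolding \<sigma>_def
    by (rule bij_betw_trans[OF bij_betw_the_inv_into[OF nth]]) (simp add: image_Suc_lessThan)
  moreover have "map \<sigma> xs = [1..<n+1]"
  proof (rule nth_equalityI)
    fix k assume "k < length (map \<sigma> xs)"
    then show "map \<sigma> xs ! k = [1..<n+1] ! k"
      using len the_inv_into_f_f[OF bij_betw_imp_inj_on[OF nth]] by (simp add: \<sigma>_def del: upt_Suc)
  qed (simp add: len)
  ultimately show ?thesis
    by blast
qed

lemma exists_relabel_abs_eq_upt:
  assumes "mset (map abs D) = mset (map int [1..<n+1])"
  shows "\<exists>\<sigma>. bij_betw \<sigma> {1..n} {1..n} \<and> map abs (relabel \<sigma> D) = map int [1..<n+1]"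
proof -
  define labels where "labels = map (nat \<circ> abs) D"
  have "mset labels = image_mset nat (mset (map abs D))"
    by (simp add: labels_def multiset.map_comp)
  also have "\<dots> = mset [1..<n+1]"
    unfolding assms by (simp add: multiset.map_comp o_def del: upt_Suc)
  finally have labels: "mset labels = mset [1..<n+1]" .
  have "distinct labels" and "set labels = {1..n}"
    using mset_eq_imp_distinct_iff[OF labels] mset_eq_setD[OF labels] by auto
  then obtain \<sigma> where \<sigma>: "bij_betw \<sigma> {1..n} {1..n}" and "map \<sigma> labels = [1..<n+1]"
    using exists_bij_betw_map_eq_upt by blast
  moreover have "set (map abs D) = {1..int n}"
    using mset_eq_setD[OF assms] unfolding set_map_int_upt .
  then have "0 \<notin> set D"
    by (metis abs_zero atLeastAtMost_iff image_eqI list.set_map not_one_le_zero)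
  then have "map abs (relabel \<sigma> D) = map int (map \<sigma> labels)"
    by (auto simp: relabel_def labels_def abs_mult)
  ultimately show ?thesis
    by auto
qed

theorem theorem4:
  fixes n :: nat and G1 G2 :: "int list"
  assumes "n \<ge> 1"
    and "ordered_gauss_code n G1" and "alternating_code G1"
    and "ordered_gauss_code n G2" and "alternating_code G2"
    and "take n G1 = std_half n" and "take n G2 = std_half n"
  shows "distinct (map abs (take n (gauss_product n G1 G2)))
         \<and> set (map abs (take n (gauss_product n G1 G2))) \<subseteq> {1..int n}
         \<and> (\<exists>\<sigma>. bij_betw \<sigma> {1..n} {1..n}
               \<and> ordered_gauss_code n (relabel \<sigma> (gauss_product n G1 G2)))"
proof -
  let ?P = "gauss_product n G1 G2" and ?D = "drop n G1"
  have G1: "gauss_code n G1"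
    using assms(2) by (simp add: ordered_gauss_code_def)
  then have first_half: "take n ?P = ?D"
    by (simp add: gauss_product_def gauss_code_def)
  have abs_D: "mset (map abs ?D) = mset (map int [1..<n+1])"
    using ordered_gauss_code_mset_abs_drop[OF assms(2)] .
  obtain \<sigma> where \<sigma>: "bij_betw \<sigma> {1..n} {1..n}"
    and ordered: "map abs (relabel \<sigma> ?D) = map int [1..<n+1]"
    using exists_relabel_abs_eq_upt[OF abs_D] by blast
  have "gauss_code n ?P"
    using G1 mset_gauss_product[OF assms(2,4)] assms(6,7) by (simp add: gauss_code_iff_mset)
  then have "ordered_gauss_code n (relabel \<sigma> ?P)"
    using gauss_code_relabel[OF \<sigma>] ordered first_half
    by (simp add: ordered_gauss_code_def relabel_def take_map)
  moreover have "distinct (map abs ?D)"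
    using mset_eq_imp_distinct_iff[OF abs_D] distinct_map_int_upt by blast
  moreover have "set (map abs ?D) = {1..int n}"
    using mset_eq_setD[OF abs_D] unfolding set_map_int_upt .
  ultimately show ?thesis
    using first_half \<sigma> by auto
qed

end
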